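(* For every $n\ge2$: no $\omega\in\widetilde{S}_n$ avoids $1234$; for each $p\in\{1243,1324,2134,2143\}$ exactly one $\omega\in\widetilde{S}_n$ (the identity) avoids $p$; and for each $p\in\{1342,1423,2314,3124\}$ the number of $\omega\in\widetilde{S}_n$ avoiding $p$ is $\binom{2n-1}{n}$. Equivalently, with $f^p(t)=\sum_{n\ge2}\#\{\omega\in\widetilde{S}_n:\omega\text{ avoids }p\}\,t^n$: $f^{1234}(t)=0$; $f^{1243}=f^{1324}=f^{2134}=f^{2143}=\sum_{n\ge2}t^n$; $f^{1342}=f^{1423}=f^{2314}=f^{3124}=\sum_{n\ge2}\binom{2n-1}{n}t^n$.
   Context: For $n\ge 2$, the affine symmetric group $\widetilde{S}_n$ is the set of bijections $\omega:\mathbb{Z}\to\mathbb{Z}$ such that $\omega(i+n)=\omega(i)+n$ for all $i\in\mathbb{Z}$ and $\sum_{i=1}^n\omega(i)=\binom{n+1}{2}$; write $\omega_i=\omega(i)$. For $p\in S_k$, $\omega$ contains $p$ if there exist integers $i_1<\cdots<i_k$ such that $\omega_{i_1}\cdots\omega_{i_k}$ has the same relative order as $p_1\cdots p_k$; otherwise $\omega$ avoids $p$. *)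

theory Defs
  imports Main
begin

definition affine_perm :: "nat \<Rightarrow> (int \<Rightarrow> int) \<Rightarrow> bool" where
  "affine_perm n w \<longleftrightarrow> bij w \<and> (\<forall>i. w (i + int n) = w i + int n)
     \<and> (\<Sum>i = 1..int n. w i) = int ((n + 1) choose 2)"

definition affine_sym_group :: "nat \<Rightarrow> (int \<Rightarrow> int) set" where
  "affine_sym_group n = {w. affine_perm n w}"

definition contains_pattern :: "(int \<Rightarrow> int) \<Rightarrow> nat list \<Rightarrow> bool" where
  "contains_pattern w p \<longleftrightarrow> (\<exists>\<iota> :: nat \<Rightarrow> int.
      (\<forall>a b. a < b \<and> b < length p \<longrightarrow> \<iota> a < \<iota> b) \<and>
      (\<forall>a < length p. \<forall>b < length p. w (\<iota> a) < w (\<iota> b) \<longleftrightarrow> p ! a < p ! b))"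

definition avoids_pattern :: "(int \<Rightarrow> int) \<Rightarrow> nat list \<Rightarrow> bool" where
  "avoids_pattern w p \<longleftrightarrow> \<not> contains_pattern w p"

definition avoiders :: "nat \<Rightarrow> nat list \<Rightarrow> (int \<Rightarrow> int) set" where
  "avoiders n p = {w \<in> affine_sym_group n. avoids_pattern w p}"

end

theory Submission
  imports Defs
begin

text \<open>
  Translates of a single position
  form an occurrence of 1234, and translates of a single inversion form occurrences of
  1243, 1324, 2134 and 2143; since only the identity has no inversion, it is the unique
  avoider of each of these four patterns.

  The counting part follows the inversion table.  For an affine permutation w let
  inv_code w t count the later positions with smaller values.  When w avoids 312 this
  table is a "code sequence": nonnegative, n-periodic, attains 0 and decreases by at most
  one per step.  Conversely every code sequence c is the table of exactly one such w,
  namely decode c, which places t just after its anchor (the nearest earlier position with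
  code value \<le> c t).  Code sequences are in bijection with their n increments
  c(t+1) + 1 - c(t), i.e. with the weak compositions of n into n parts, which are counted
  by binomial (2n-1, n).  Finally, translates extend every occurrence of 231 to occurrences of
  1342 and 2314 and every occurrence of 312 to occurrences of 1423 and 3124, so these four
  patterns have the same avoiders as 231 or 312; reverse-complement exchanges 231 and 312.
\<close>

lemma shift_equivariant_multiple:
  assumes "\<And>t. w (t + int n) = w t + int n"
  shows "w (t + q * int n) = w t + q * int n"
proof (induction q rule: int_induct[where k=0])
  case base then show ?case by simp
next
  case (step1 i) then show ?case using assms[of "t + i * int n"] by (simp add: algebra_simps)
next
  case (step2 i) then show ?case using assms[of "t + (i - 1) * int n"] by (simp add: algebra_simps)
qed

lemma periodic_multiple:
  fixes f :: "int \<Rightarrow> 'a"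
  assumes "\<And>t. f (t + int n) = f t"
  shows "f (t + q * int n) = f t"
proof (induction q rule: int_induct[where k=0])
  case base then show ?case by simp
next
  case (step1 i) then show ?case using assms[of "t + i * int n"] by (simp add: algebra_simps)
next
  case (step2 i) then show ?case using assms[of "t + (i - 1) * int n"] by (simp add: algebra_simps)
qed

lemma periodic_mod:
  fixes f :: "int \<Rightarrow> 'a"
  assumes "\<And>t. f (t + int n) = f t"
  shows "f t = f (t mod int n)"
  using periodic_multiple[of f n, OF assms, of "t mod int n" "t div int n"] by simp

lemma periodic_locally_constant:
  fixes f :: "int \<Rightarrow> 'a"
  assumes per: "\<And>t. f (t + int n) = f t" and step: "\<And>i. i < n \<Longrightarrow> f (int i + 1) = f (int i)"
    and n: "0 < n"
  shows "f t = f 0"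
proof -
  have first_period: "f (int i) = f 0" if "i \<le> n" for i
    using that by (induction i) (use step in \<open>auto simp: add.commute\<close>)
  have "0 \<le> t mod int n" "t mod int n < int n" using n by simp_all
  then have "t mod int n = int (nat (t mod int n))" "nat (t mod int n) \<le> n" by linarith+
  then show ?thesis using periodic_mod[of f n, OF per] first_period by metis
qed

lemma window_contains_translate:
  assumes "0 < n"
  shows "\<exists>q. a < z + q * int n \<and> z + q * int n \<le> a + int n"
proof -
  define q where "q = (a - z) div int n + 1"
  have "q * int n = a - z - (a - z) mod int n + int n"
    unfolding q_def by (simp add: algebra_simps minus_mod_eq_mult_div)
  moreover have "0 \<le> (a - z) mod int n" "(a - z) mod int n < int n" using assms by simp_all
  ultimately have "a < z + q * int n \<and> z + q * int n \<le> a + int n" by linarith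
  then show ?thesis by blast
qed

lemma periodic_window_sum:
  fixes g :: "int \<Rightarrow> int"
  assumes per: "\<And>t. g (t + int n) = g t"
  shows "sum g {a+1..a+int n} = sum g {1..int n}"
proof (cases "n = 0")
  case True then show ?thesis by simp
next
  case False
  have slide: "sum g {b+2..b+1+int n} = sum g {b+1..b+int n}" for b
  proof -
    have "{b+1..b+1+int n} = insert (b+1+int n) {b+1..b+int n}" using False by auto
    then have "sum g {b+1..b+1+int n} = g (b+1+int n) + sum g {b+1..b+int n}" by simp
    moreover have "{b+1..b+1+int n} = insert (b+1) {b+2..b+1+int n}" using False by auto
    then have "sum g {b+1..b+1+int n} = g (b+1) + sum g {b+2..b+1+int n}" by simp
    moreover have "g (b+1+int n) = g (b+1)" using per[of "b+1"] .
    ultimately show ?thesis by simp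
  qed
  show ?thesis
  proof (induction a rule: int_induct[where k=0])
    case base then show ?case by simp
  next
    case (step1 i) then show ?case using slide[of i] by (simp add: add.assoc)
  next
    case (step2 i) then show ?case using slide[of "i - 1"] by (simp add: algebra_simps)
  qed
qed

lemma sum_first_integers: "(\<Sum>i = 1..int n. i) = int ((n + 1) choose 2)"
proof (induction n)
  case 0 then show ?case by simp
next
  case (Suc n)
  have "{1..int (Suc n)} = insert (int n + 1) {1..int n}" by auto
  then have "(\<Sum>i = 1..int (Suc n). i) = (\<Sum>i = 1..int n. i) + (int n + 1)" by simp
  also have "\<dots> = int ((Suc n + 1) choose 2)"
    using Suc binomial_Suc_Suc[of "n+1" 1] by (simp add: numeral_2_eq_2)
  finally show ?case .
qed

lemma affine_perm_shift: "affine_perm n w \<Longrightarrow> w (t + int n) = w t + int n"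
  unfolding affine_perm_def by blast

lemma affine_perm_inj: "affine_perm n w \<Longrightarrow> inj w"
  unfolding affine_perm_def by (simp add: bij_is_inj)

lemma affine_perm_id: "affine_perm n id"
  unfolding affine_perm_def using sum_first_integers[of n] by simp

text \<open>Translations by arbitrarily large multiples of n commute with w; this is what makes
  translated copies of a pattern occurrence available far to the left and to the right.\<close>
lemma affine_perm_large_translation:
  assumes w: "affine_perm n w" and n: "0 < n"
  obtains M where "K \<le> M" "\<And>t. w (t + M) = w t + M" "\<And>t. w (t - M) = w t - M"
proof
  define q where "q = \<bar>K\<bar> + 1"
  have shift: "w (t + q * int n) = w t + q * int n" for t
    using shift_equivariant_multiple[of w n, OF affine_perm_shift[OF w]] .
  have "0 < q" "1 \<le> int n" unfolding q_def using n by simp_all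
  then have "q \<le> q * int n" by simp
  then show "K \<le> q * int n" unfolding q_def by linarith
  show "w (t + q * int n) = w t + q * int n" for t using shift .
  show "w (t - q * int n) = w t - q * int n" for t using shift[of "t - q * int n"] by simp
qed

text \<open>The displacement w t - t is periodic, hence bounded.\<close>
lemma affine_perm_displacement_bounded:
  assumes "affine_perm n w" "0 < n"
  obtains M where "\<And>t. \<bar>w t - t\<bar> \<le> M"
proof
  define g where "g t = \<bar>w t - t\<bar>" for t
  have per: "g (t + int n) = g t" for t unfolding g_def using affine_perm_shift[OF assms(1)] by simp
  show "\<bar>w t - t\<bar> \<le> Max (g ` {0..<int n})" for t
  proof -
    have "t mod int n \<in> {0..<int n}" using assms(2) by simp
    then have "g (t mod int n) \<le> Max (g ` {0..<int n})" by simp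
    then show ?thesis using periodic_mod[of g n, OF per, of t] unfolding g_def by simp
  qed
qed

lemma strict_mono_surj_int_translation:
  fixes f :: "int \<Rightarrow> int"
  assumes mono: "\<And>x y. x < y \<Longrightarrow> f x < f y" and surj: "surj f"
  shows "f y = y + f 0"
proof -
  have step: "f (x + 1) = f x + 1" for x
  proof (rule ccontr)
    assume "f (x + 1) \<noteq> f x + 1"
    moreover have "f x < f (x + 1)" using mono by simp
    ultimately have gap: "f x + 1 < f (x + 1)" by simp
    obtain z where z: "f z = f x + 1" using surj by (metis surjD)
    have "x < z"
    proof (rule ccontr)
      assume "\<not> x < z"
      then have "f z \<le> f x" using mono[of z x] by (cases "z = x") auto
      then show False using z by simp
    qed
    moreover have "z < x + 1"
    proof (rule ccontr)
      assume "\<not> z < x + 1"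
      then have "f (x + 1) \<le> f z" using mono[of "x + 1" z] by (cases "z = x + 1") auto
      then show False using z gap by simp
    qed
    ultimately show False by simp
  qed
  show ?thesis
  proof (induction y rule: int_induct[where k=0])
    case base then show ?case by simp
  next
    case (step1 i) then show ?case using step[of i] by simp
  next
    case (step2 i) then show ?case using step[of "i - 1"] by simp
  qed
qed

text \<open>An affine permutation is determined by the relative order of its values:
  w' \<circ> w\<inverse> is an increasing bijection, hence a translation, and the sum condition
  forces the translation to be trivial.\<close>
lemma affine_perm_eqI_same_order:
  assumes w: "affine_perm n w" and w': "affine_perm n w'" and n: "0 < n"
    and same_order: "\<And>a b. a < b \<Longrightarrow> (w a < w b \<longleftrightarrow> w' a < w' b)"
  shows "w = w'"
proof -
  have bw: "bij w" and bw': "bij w'" using w w' unfolding affine_perm_def by auto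
  define f where "f = w' \<circ> inv w"
  have f_w: "f (w t) = w' t" for t unfolding f_def using bw by (simp add: bij_is_inj)
  have mono: "f x < f y" if "x < y" for x y
  proof -
    obtain a b where ab: "x = w a" "y = w b" using bw by (metis bij_pointE)
    then have "a \<noteq> b" using that by auto
    then have "w' a \<noteq> w' b" using bw' by (metis bij_is_inj injD)
    then have "w' a < w' b" using same_order[of a b] same_order[of b a] ab that
      by (cases a b rule: linorder_cases) auto
    then show ?thesis using f_w ab by simp
  qed
  have "surj f" unfolding f_def using bw bw' by (intro comp_surj) (auto simp: bij_is_surj bij_imp_bij_inv)
  then have translate: "w' t = w t + f 0" for t
    using strict_mono_surj_int_translation[of f, OF mono] f_w by metis
  have "(\<Sum>i = 1..int n. w' i) = (\<Sum>i = 1..int n. w i) + int n * f 0"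
    using translate by (simp add: sum.distrib)
  moreover have "(\<Sum>i = 1..int n. w' i) = (\<Sum>i = 1..int n. w i)"
    using w w' unfolding affine_perm_def by simp
  ultimately have "f 0 = 0" using n by simp
  then show ?thesis using translate by auto
qed

lemma less4_cases: "(\<forall>a<(4::nat). P a) \<longleftrightarrow> P 0 \<and> P 1 \<and> P 2 \<and> P 3"
  by (auto simp: numeral_eq_Suc less_Suc_eq)

lemma contains4_iff:
  "contains_pattern w [p0, p1, p2, p3] \<longleftrightarrow> (\<exists>i0 i1 i2 i3. i0 < i1 \<and> i1 < i2 \<and> i2 < i3 \<and>
     (\<forall>a<4. \<forall>b<4. w ([i0, i1, i2, i3] ! a) < w ([i0, i1, i2, i3] ! b)
        \<longleftrightarrow> [p0, p1, p2, p3] ! a < [p0, p1, p2, p3] ! b))"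
  (is "_ \<longleftrightarrow> (\<exists>i0 i1 i2 i3. i0 < i1 \<and> i1 < i2 \<and> i2 < i3 \<and> ?iso i0 i1 i2 i3)")
proof
  have len: "length [p0, p1, p2, p3] = 4" by simp
  assume "contains_pattern w [p0, p1, p2, p3]"
  then obtain \<iota> :: "nat \<Rightarrow> int" where
    incr: "\<forall>a b. a < b \<and> b < 4 \<longrightarrow> \<iota> a < \<iota> b" and
    iso: "\<forall>a<4. \<forall>b<4. w (\<iota> a) < w (\<iota> b) \<longleftrightarrow> [p0, p1, p2, p3] ! a < [p0, p1, p2, p3] ! b"
    unfolding contains_pattern_def len by (elim exE conjE)
  have "?iso (\<iota> 0) (\<iota> 1) (\<iota> 2) (\<iota> 3)"
    using iso unfolding less4_cases by simp
  moreover have "\<iota> 0 < \<iota> 1" "\<iota> 1 < \<iota> 2" "\<iota> 2 < \<iota> 3"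
    using incr[rule_format, of 0 1] incr[rule_format, of 1 2] incr[rule_format, of 2 3] by simp_all
  ultimately show "\<exists>i0 i1 i2 i3. i0 < i1 \<and> i1 < i2 \<and> i2 < i3 \<and> ?iso i0 i1 i2 i3" by blast
next
  assume "\<exists>i0 i1 i2 i3. i0 < i1 \<and> i1 < i2 \<and> i2 < i3 \<and> ?iso i0 i1 i2 i3"
  then obtain i0 i1 i2 i3 where incr: "i0 < i1" "i1 < i2" "i2 < i3" and iso: "?iso i0 i1 i2 i3"
    by blast
  have "\<forall>a b. a < b \<and> b < 4 \<longrightarrow> [i0, i1, i2, i3] ! a < [i0, i1, i2, i3] ! b"
    using incr by (auto simp: numeral_eq_Suc less_Suc_eq)
  then show "contains_pattern w [p0, p1, p2, p3]"
    using iso unfolding contains_pattern_def by (intro exI[of _ "(!) [i0, i1, i2, i3]"]) simp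
qed

lemma contains_1234:
  "contains_pattern w [1,2,3,4] \<longleftrightarrow>
     (\<exists>i j k l. i < j \<and> j < k \<and> k < l \<and> w i < w j \<and> w j < w k \<and> w k < w l)"
  unfolding contains4_iff less4_cases by (intro ex_cong1) auto

lemma contains_1243:
  "contains_pattern w [1,2,4,3] \<longleftrightarrow>
     (\<exists>i j k l. i < j \<and> j < k \<and> k < l \<and> w i < w j \<and> w j < w l \<and> w l < w k)"
  unfolding contains4_iff less4_cases by (intro ex_cong1) auto

lemma contains_1324:
  "contains_pattern w [1,3,2,4] \<longleftrightarrow>
     (\<exists>i j k l. i < j \<and> j < k \<and> k < l \<and> w i < w k \<and> w k < w j \<and> w j < w l)"
  unfolding contains4_iff less4_cases by (intro ex_cong1) auto

lemma contains_2134: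
  "contains_pattern w [2,1,3,4] \<longleftrightarrow>
     (\<exists>i j k l. i < j \<and> j < k \<and> k < l \<and> w j < w i \<and> w i < w k \<and> w k < w l)"
  unfolding contains4_iff less4_cases by (intro ex_cong1) auto

lemma contains_2143:
  "contains_pattern w [2,1,4,3] \<longleftrightarrow>
     (\<exists>i j k l. i < j \<and> j < k \<and> k < l \<and> w j < w i \<and> w i < w l \<and> w l < w k)"
  unfolding contains4_iff less4_cases by (intro ex_cong1) auto

lemma contains_1342:
  "contains_pattern w [1,3,4,2] \<longleftrightarrow>
     (\<exists>i j k l. i < j \<and> j < k \<and> k < l \<and> w i < w l \<and> w l < w j \<and> w j < w k)"
  unfolding contains4_iff less4_cases by (intro ex_cong1) auto

lemma contains_1423:
  "contains_pattern w [1,4,2,3] \<longleftrightarrow>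
     (\<exists>i j k l. i < j \<and> j < k \<and> k < l \<and> w i < w k \<and> w k < w l \<and> w l < w j)"
  unfolding contains4_iff less4_cases by (intro ex_cong1) auto

lemma contains_2314:
  "contains_pattern w [2,3,1,4] \<longleftrightarrow>
     (\<exists>i j k l. i < j \<and> j < k \<and> k < l \<and> w k < w i \<and> w i < w j \<and> w j < w l)"
  unfolding contains4_iff less4_cases by (intro ex_cong1) auto

lemma contains_3124:
  "contains_pattern w [3,1,2,4] \<longleftrightarrow>
     (\<exists>i j k l. i < j \<and> j < k \<and> k < l \<and> w j < w k \<and> w k < w i \<and> w i < w l)"
  unfolding contains4_iff less4_cases by (intro ex_cong1) auto

section \<open>Patterns forced by translation\<close>

text \<open>The translates t, t + M, t + 2M, t + 3M of a position form an occurrence of 1234.\<close>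
lemma affine_perm_contains_1234:
  assumes "affine_perm n w" "0 < n"
  shows "contains_pattern w [1,2,3,4]"
proof -
  obtain M where M: "1 \<le> M" "\<And>t. w (t + M) = w t + M" "\<And>t. w (t - M) = w t - M"
    using affine_perm_large_translation[OF assms, of 1] by blast
  show ?thesis unfolding contains_1234
    by (rule exI[of _ 0], rule exI[of _ M], rule exI[of _ "M + M"], rule exI[of _ "M + M + M"])
      (use M(1) M(2)[of 0] M(2)[of M] M(2)[of "M + M"] in auto)
qed

text \<open>An affine permutation without inversions has the same relative order as the identity.\<close>
lemma affine_perm_no_inversion_id:
  assumes w: "affine_perm n w" and n: "0 < n" and no_inversion: "\<not> (\<exists>a b. a < b \<and> w b < w a)"
  shows "w = id"
proof (rule affine_perm_eqI_same_order[OF w affine_perm_id n])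
  fix a b :: int assume "a < b"
  moreover have "w a \<noteq> w b" using affine_perm_inj[OF w] \<open>a < b\<close> by (metis injD less_irrefl)
  ultimately show "w a < w b \<longleftrightarrow> id a < id b" using no_inversion by force
qed

text \<open>A single inversion together with its far translates yields each of 1243, 1324, 2134
  and 2143.\<close>
lemma inversion_contains_patterns:
  assumes w: "affine_perm n w" and n: "0 < n" and inversion: "a < b" "w b < w a"
  shows "contains_pattern w [1,2,4,3]" "contains_pattern w [1,3,2,4]"
    "contains_pattern w [2,1,3,4]" "contains_pattern w [2,1,4,3]"
proof -
  obtain M where M: "w a - w b + (b - a) + 1 \<le> M" "\<And>t. w (t + M) = w t + M"
    "\<And>t. w (t - M) = w t - M"
    using affine_perm_large_translation[OF w n, of "w a - w b + (b - a) + 1"] by blast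
  show "contains_pattern w [1,2,4,3]" unfolding contains_1243
    by (rule exI[of _ "a - M - M"], rule exI[of _ "a - M"], rule exI[of _ a], rule exI[of _ b])
      (use M(1) M(3)[of a] M(3)[of "a - M"] inversion in auto)
  show "contains_pattern w [1,3,2,4]" unfolding contains_1324
    by (rule exI[of _ "a - M"], rule exI[of _ a], rule exI[of _ b], rule exI[of _ "a + M"])
      (use M(1) M(2)[of a] M(3)[of a] inversion in auto)
  show "contains_pattern w [2,1,3,4]" unfolding contains_2134
    by (rule exI[of _ a], rule exI[of _ b], rule exI[of _ "a + M"], rule exI[of _ "a + M + M"])
      (use M(1) M(2)[of a] M(2)[of "a + M"] inversion in auto)
  show "contains_pattern w [2,1,4,3]" unfolding contains_2143
    by (rule exI[of _ a], rule exI[of _ b], rule exI[of _ "a + M"], rule exI[of _ "b + M"])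
      (use M(1) M(2)[of a] M(2)[of b] inversion in auto)
qed

section \<open>Code sequences and their decoding\<close>

definition inv_code :: "(int \<Rightarrow> int) \<Rightarrow> int \<Rightarrow> int" where
  "inv_code w t = int (card {j. t < j \<and> w j < w t})"

text \<open>These are exactly the inversion tables of the affine
  permutations avoiding 312.\<close>
definition code_seq :: "nat \<Rightarrow> (int \<Rightarrow> int) \<Rightarrow> bool" where
  "code_seq n c \<longleftrightarrow> 0 < n \<and> (\<forall>t. 0 \<le> c t) \<and> (\<forall>t. c (t + int n) = c t)
     \<and> (\<forall>t. c t \<le> c (t + 1) + 1) \<and> (\<exists>z. c z = 0)"

definition anchor :: "(int \<Rightarrow> int) \<Rightarrow> int \<Rightarrow> int" where
  "anchor c t = t - int (LEAST k. 0 < k \<and> c (t - int k) \<le> c t)"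

definition decode :: "(int \<Rightarrow> int) \<Rightarrow> int \<Rightarrow> int" where
  "decode c t = anchor c t + 1 + c t"

definition avoids_312 :: "(int \<Rightarrow> int) \<Rightarrow> bool" where
  "avoids_312 w \<longleftrightarrow> \<not> (\<exists>i j k. i < j \<and> j < k \<and> w j < w k \<and> w k < w i)"

lemma code_seq_zero_in_window:
  assumes "code_seq n c"
  obtains z where "a < z" "z \<le> a + int n" "c z = 0"
proof -
  obtain z0 where z0: "c z0 = 0" and n: "0 < n" and per: "\<And>t. c (t + int n) = c t"
    using assms unfolding code_seq_def by blast
  obtain q where "a < z0 + q * int n" "z0 + q * int n \<le> a + int n"
    using window_contains_translate[OF n] by blast
  moreover have "c (z0 + q * int n) = 0" using periodic_multiple[of c n, OF per] z0 by simp
  ultimately show ?thesis using that by blast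
qed

lemma anchor_below:
  assumes "code_seq n c"
  shows "anchor c t < t" "c (anchor c t) \<le> c t"
proof -
  obtain z where "z < t" "c z = 0"
    using code_seq_zero_in_window[OF assms, of "t - 1 - int n"] by force
  moreover have "0 \<le> c t" using assms unfolding code_seq_def by blast
  ultimately have "\<exists>k. 0 < k \<and> c (t - int k) \<le> c t" by (intro exI[of _ "nat (t - z)"]) auto
  from LeastI_ex[OF this] show "anchor c t < t" "c (anchor c t) \<le> c t"
    unfolding anchor_def by auto
qed

lemma anchor_between:
  assumes "anchor c t < u" "u < t"
  shows "c t < c u"
proof -
  define k where "k = nat (t - u)"
  have k: "0 < k" "k < (LEAST k. 0 < k \<and> c (t - int k) \<le> c t)" "u = t - int k"
    using assms unfolding k_def anchor_def by auto
  show ?thesis using not_less_Least[OF k(2)] k(1,3) by auto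
qed

lemma anchor_maximal:
  assumes "u < t" "c u \<le> c t"
  shows "u \<le> anchor c t"
  using anchor_between[of c t u] assms by force

lemma anchor_shift:
  assumes "code_seq n c"
  shows "anchor c (t + int n) = anchor c t + int n"
proof -
  have per: "\<And>t. c (t + int n) = c t" using assms unfolding code_seq_def by blast
  have "\<And>k. c (t + int n - int k) = c (t - int k)" using per[of "t - int _"] by (simp add: algebra_simps)
  then show ?thesis unfolding anchor_def using per[of t] by simp
qed

text \<open>Since c drops by at most one per step, t + c t is weakly increasing.\<close>
lemma code_seq_level_mono:
  assumes "code_seq n c" "a \<le> b"
  shows "a + c a \<le> b + c b"
proof -
  have "a + c a \<le> (a + int k) + c (a + int k)" for k
  proof (induction k)
    case (Suc k)
    have "c (a + int k) \<le> c (a + int k + 1) + 1" using assms(1) unfolding code_seq_def by blast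
    moreover have shift: "a + int (Suc k) = a + int k + 1" by simp
    ultimately show ?case unfolding shift using Suc by linarith
  qed simp
  from this[of "nat (b - a)"] show ?thesis using assms(2) by simp
qed

lemma decode_increase:
  assumes "code_seq n c" "t1 \<le> anchor c t2"
  shows "decode c t1 < decode c t2"
proof -
  have "decode c t1 \<le> t1 + c t1" using anchor_below(1)[OF assms(1), of t1] unfolding decode_def by simp
  also have "\<dots> \<le> anchor c t2 + c (anchor c t2)" using code_seq_level_mono[OF assms] .
  also have "\<dots> \<le> anchor c t2 + c t2" using anchor_below(2)[OF assms(1), of t2] by simp
  also have "\<dots> < decode c t2" unfolding decode_def by simp
  finally show ?thesis .
qed

lemma decode_decrease:
  assumes "code_seq n c" "t1 < t2" "anchor c t2 < t1"
  shows "decode c t2 < decode c t1"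
proof -
  have less: "c t2 < c t1" using anchor_between[OF assms(3,2)] .
  then have "c (anchor c t2) \<le> c t1" using anchor_below(2)[OF assms(1), of t2] by simp
  then have "anchor c t2 \<le> anchor c t1" using anchor_maximal[of "anchor c t2" t1 c] assms(3) by simp
  then show ?thesis using less unfolding decode_def by simp
qed

lemma decode_less_iff:
  assumes "code_seq n c" "t1 < t2"
  shows "decode c t1 < decode c t2 \<longleftrightarrow> t1 \<le> anchor c t2"
  using decode_increase[OF assms(1), of t1 t2] decode_decrease[OF assms]
  by (cases "t1 \<le> anchor c t2") auto

lemma decode_inj:
  assumes "code_seq n c"
  shows "inj (decode c)"
proof (rule injI)
  have neq: "decode c x \<noteq> decode c y" if "x < y" for x y
    using decode_increase[OF assms, of x y] decode_decrease[OF assms that]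
    by (cases "x \<le> anchor c y") auto
  fix x y assume "decode c x = decode c y"
  then show "x = y" using neq[of x y] neq[of y x] by (cases x y rule: linorder_cases) auto
qed

lemma decode_shift:
  assumes "code_seq n c"
  shows "decode c (t + int n) = decode c t + int n"
  using anchor_shift[OF assms, of t] assms unfolding decode_def code_seq_def by simp

lemma decode_block:
  assumes "code_seq n c" "c a = 0"
  shows "decode c ` {a<..a + int n} = {a<..a + int n}"
proof (rule endo_inj_surj)
  have zero_end: "c (a + int n) = 0" using assms unfolding code_seq_def by simp
  have "a < decode c t \<and> decode c t \<le> a + int n" if "a < t" "t \<le> a + int n" for t
  proof
    have "decode c t \<le> t + c t" using anchor_below(1)[OF assms(1), of t] unfolding decode_def by simp
    also have "\<dots> \<le> a + int n" using code_seq_level_mono[OF assms(1) that(2)] zero_end by simp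
    finally show "decode c t \<le> a + int n" .
    have "0 \<le> c t" using assms(1) unfolding code_seq_def by blast
    then have "a \<le> anchor c t" using anchor_maximal[OF that(1)] assms(2) by simp
    then show "a < decode c t" using \<open>0 \<le> c t\<close> unfolding decode_def by simp
  qed
  then show "decode c ` {a<..a + int n} \<subseteq> {a<..a + int n}" by fastforce
  show "inj_on (decode c) {a<..a + int n}" using decode_inj[OF assms(1)] by (simp add: inj_on_def inj_def)
qed simp

lemma decode_surj:
  assumes "code_seq n c"
  shows "surj (decode c)"
proof -
  have "v \<in> range (decode c)" for v
  proof -
    obtain z where "v - 1 - int n < z" "z \<le> v - 1" "c z = 0"
      using code_seq_zero_in_window[OF assms, of "v - 1 - int n"] by auto
    then have "v \<in> {z<..z + int n}" by auto
    then have "v \<in> decode c ` {z<..z + int n}" using decode_block[OF assms \<open>c z = 0\<close>] by simp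
    then show ?thesis by blast
  qed
  then show ?thesis by blast
qed

lemma decode_sum:
  assumes "code_seq n c"
  shows "(\<Sum>i = 1..int n. decode c i) = int ((n + 1) choose 2)"
proof -
  obtain a where a: "c a = 0" using assms unfolding code_seq_def by blast
  define g where "g i = decode c i - i" for i
  have per: "g (t + int n) = g t" for t unfolding g_def using decode_shift[OF assms] by simp
  have block: "{a+1..a + int n} = {a<..a + int n}" by auto
  have "sum (decode c) {a<..a + int n} = sum id (decode c ` {a<..a + int n})"
    using sum.reindex[of "decode c" "{a<..a + int n}" id] decode_inj[OF assms]
    by (simp add: inj_on_def inj_def)
  then have "sum g {a+1..a + int n} = 0"
    unfolding block g_def decode_block[OF assms a] by (simp add: sum_subtractf)
  then have "sum g {1..int n} = 0" using periodic_window_sum[of g n a, OF per] by simp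
  then show ?thesis using sum_first_integers[of n] unfolding g_def by (simp add: sum_subtractf)
qed

lemma decode_affine:
  assumes "code_seq n c"
  shows "affine_perm n (decode c)"
  unfolding affine_perm_def bij_def
  using decode_inj[OF assms] decode_surj[OF assms] decode_shift[OF assms] decode_sum[OF assms]
  by blast

lemma decode_avoids_312:
  assumes "code_seq n c"
  shows "avoids_312 (decode c)"
  unfolding avoids_312_def
proof
  assume "\<exists>i j k. i < j \<and> j < k \<and> decode c j < decode c k \<and> decode c k < decode c i"
  then obtain i j k where ijk: "i < j" "j < k" "decode c j < decode c k" "decode c k < decode c i"
    by blast
  have "j \<le> anchor c k" using decode_less_iff[OF assms ijk(2)] ijk(3) by simp
  moreover have "\<not> i \<le> anchor c k" using decode_less_iff[OF assms, of i k] ijk by simp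
  ultimately show False using ijk(1) by simp
qed

text \<open>The positions after t at which c attains a new strict minimum, counted from t on.
  Under decoding these are exactly the later positions with smaller values.\<close>
definition strict_minima_after :: "(int \<Rightarrow> int) \<Rightarrow> int \<Rightarrow> int set" where
  "strict_minima_after c t = {j. t < j \<and> (\<forall>k. t \<le> k \<and> k < j \<longrightarrow> c j < c k)}"

text \<open>Since c drops by at most one per step, the first later position below level c t has
  code value exactly c t - 1.\<close>
lemma code_seq_first_drop:
  assumes c: "code_seq n c" and ct: "c t = int L + 1"
  obtains t' where "t < t'" "c t' = int L" "\<And>k. t \<le> k \<Longrightarrow> k < t' \<Longrightarrow> int L < c k"
proof -
  obtain z where "t < z" "c z = 0" using code_seq_zero_in_window[OF c, of t] by blast
  then have ex: "\<exists>k::nat. 0 < k \<and> c (t + int k) \<le> int L" by (intro exI[of _ "nat (z - t)"]) auto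
  define K where "K = (LEAST k::nat. 0 < k \<and> c (t + int k) \<le> int L)"
  have K: "0 < K" "c (t + int K) \<le> int L" using LeastI_ex[OF ex] unfolding K_def by auto
  have above: "int L < c k" if "t \<le> k" "k < t + int K" for k
  proof (cases "k = t")
    case False
    then have "nat (k - t) < K" "0 < nat (k - t)" using that by auto
    from not_less_Least[OF this(1)[unfolded K_def]] this(2) show ?thesis using that by auto
  qed (use ct in simp)
  have "c (t + int K - 1) \<le> c (t + int K) + 1" using c unfolding code_seq_def by (metis diff_add_cancel)
  moreover have "int L < c (t + int K - 1)" using above[of "t + int K - 1"] K(1) by simp
  ultimately have "c (t + int K) = int L" using K(2) by simp
  then show ?thesis using that[of "t + int K"] K(1) above by simp
qed

lemma strict_minima_after_count:
  assumes c: "code_seq n c"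
  shows "c t = int m \<Longrightarrow> finite (strict_minima_after c t) \<and> card (strict_minima_after c t) = m"
proof (induction m arbitrary: t)
  case 0
  have "\<not> c j < c t" for j using c 0 unfolding code_seq_def by (auto simp: not_less)
  then have "strict_minima_after c t = {}"
    unfolding strict_minima_after_def by (auto dest!: spec[where x = t])
  then show ?case by simp
next
  case (Suc L)
  then obtain t' where t': "t < t'" "c t' = int L" and above: "\<And>k. t \<le> k \<Longrightarrow> k < t' \<Longrightarrow> int L < c k"
    using code_seq_first_drop[OF c, of t L] by auto
  have "strict_minima_after c t = insert t' (strict_minima_after c t')"
  proof (intro set_eqI iffI)
    fix j assume "j \<in> strict_minima_after c t"
    then have j: "t < j" "\<And>k. t \<le> k \<Longrightarrow> k < j \<Longrightarrow> c j < c k"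
      unfolding strict_minima_after_def by auto
    have "\<not> j < t'" using above[of j] j(2)[of t] j(1) Suc.prems by force
    then show "j \<in> insert t' (strict_minima_after c t')"
      using j t'(1) unfolding strict_minima_after_def by auto
  next
    fix j assume "j \<in> insert t' (strict_minima_after c t')"
    then have j: "t' \<le> j" "\<And>k. t' \<le> k \<Longrightarrow> k < j \<Longrightarrow> c j < c k" "c j \<le> c t'"
      unfolding strict_minima_after_def by force+
    have "c j < c k" if "t \<le> k" "k < j" for k
      using j(2)[of k] above[of k] j(3) t'(2) that by (cases "k < t'") auto
    then show "j \<in> strict_minima_after c t" using j(1) t'(1) unfolding strict_minima_after_def by auto
  qed
  moreover have "t' \<notin> strict_minima_after c t'" unfolding strict_minima_after_def by simp
  ultimately show ?case using Suc.IH t'(2) by simp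
qed

lemma inv_code_decode:
  assumes c: "code_seq n c"
  shows "inv_code (decode c) t = c t"
proof -
  have "{j. t < j \<and> decode c j < decode c t} = strict_minima_after c t"
  proof (intro set_eqI iffI)
    fix j assume "j \<in> {j. t < j \<and> decode c j < decode c t}"
    then have j: "t < j" "decode c j < decode c t" by auto
    then have "anchor c j < t" using decode_increase[OF c, of t j] by force
    then show "j \<in> strict_minima_after c t"
      using anchor_between[of c j] j(1) unfolding strict_minima_after_def by auto
  next
    fix j assume "j \<in> strict_minima_after c t"
    then have j: "t < j" and below: "\<And>k. t \<le> k \<Longrightarrow> k < j \<Longrightarrow> c j < c k"
      unfolding strict_minima_after_def by auto
    have "anchor c j < t" using below[of "anchor c j"] anchor_below[OF c, of j] by force
    then show "j \<in> {j. t < j \<and> decode c j < decode c t}" using decode_decrease[OF c j] j by simp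
  qed
  moreover have "0 \<le> c t" using c unfolding code_seq_def by blast
  ultimately show ?thesis
    unfolding inv_code_def using strict_minima_after_count[OF c, of t "nat (c t)"] by simp
qed

section \<open>Inversion tables of 312-avoiding affine permutations\<close>

lemma inv_code_finite:
  assumes "affine_perm n w" "0 < n"
  shows "finite {j. t < j \<and> w j < w t}"
proof -
  obtain M where M: "\<And>t. \<bar>w t - t\<bar> \<le> M" using affine_perm_displacement_bounded[OF assms] by blast
  have "{j. t < j \<and> w j < w t} \<subseteq> {t<..w t + M}"
  proof
    fix j assume "j \<in> {j. t < j \<and> w j < w t}"
    moreover have "\<bar>w j - j\<bar> \<le> M" using M .
    ultimately show "j \<in> {t<..w t + M}" by auto
  qed
  then show ?thesis by (rule finite_subset) simp
qed

lemma inv_code_shift: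
  assumes "affine_perm n w"
  shows "inv_code w (t + int n) = inv_code w t"
proof -
  have "{j. t + int n < j \<and> w j < w (t + int n)} = (\<lambda>j. j + int n) ` {j. t < j \<and> w j < w t}"
  proof (intro set_eqI iffI)
    fix j assume "j \<in> {j. t + int n < j \<and> w j < w (t + int n)}"
    then have "j - int n \<in> {j. t < j \<and> w j < w t}"
      using affine_perm_shift[OF assms, of "j - int n"] affine_perm_shift[OF assms, of t] by auto
    then show "j \<in> (\<lambda>j. j + int n) ` {j. t < j \<and> w j < w t}" by force
  qed (use affine_perm_shift[OF assms] in auto)
  then show ?thesis unfolding inv_code_def by (simp add: card_image)
qed

text \<open>Avoiding 312 means: a later position below w t is also below w (t + 1), unless it is
  t + 1 itself.  Hence the table drops by at most one per step.\<close>
lemma inv_code_step: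
  assumes w: "affine_perm n w" "0 < n" "avoids_312 w"
  shows "inv_code w t \<le> inv_code w (t + 1) + 1"
proof -
  have "{j. t < j \<and> w j < w t} \<subseteq> insert (t + 1) {j. t + 1 < j \<and> w j < w (t + 1)}"
  proof
    fix j assume j: "j \<in> {j. t < j \<and> w j < w t}"
    show "j \<in> insert (t + 1) {j. t + 1 < j \<and> w j < w (t + 1)}"
    proof (cases "j = t + 1")
      case False
      then have "t + 1 < j" using j by auto
      moreover have "w j \<noteq> w (t + 1)" using affine_perm_inj[OF w(1)] \<open>t + 1 < j\<close> by (metis injD less_irrefl)
      moreover have "\<not> w (t + 1) < w j"
        using w(3) j \<open>t + 1 < j\<close> unfolding avoids_312_def by (metis (mono_tags) less_add_one mem_Collect_eq)
      ultimately show ?thesis by simp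
    qed simp
  qed
  then have "card {j. t < j \<and> w j < w t} \<le> card (insert (t + 1) {j. t + 1 < j \<and> w j < w (t + 1)})"
    by (rule card_mono[rotated]) (simp add: inv_code_finite[OF w(1,2)])
  also have "\<dots> \<le> card {j. t + 1 < j \<and> w j < w (t + 1)} + 1" by (simp add: card_insert_le_m1 card_insert_if)
  finally show ?thesis unfolding inv_code_def by simp
qed

text \<open>A position of minimal displacement w t - t has no later smaller value.\<close>
lemma inv_code_has_zero:
  assumes "affine_perm n w" "0 < n"
  obtains z where "inv_code w z = 0"
proof -
  define g where "g t = w t - t" for t
  have per: "g (t + int n) = g t" for t unfolding g_def using affine_perm_shift[OF assms(1)] by simp
  have "g ` {0..<int n} \<noteq> {}" using assms(2) by simp
  then obtain z where "z \<in> {0..<int n}" and z_min: "g z = Min (g ` {0..<int n})"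
    by (metis Min_in finite_atLeastLessThan_int finite_imageI imageE)
  have minimal: "g z \<le> g t" for t
  proof -
    have "t mod int n \<in> {0..<int n}" using assms(2) by simp
    then show ?thesis using periodic_mod[of g n, OF per, of t] z_min by simp
  qed
  have "\<not> w j < w z" if "z < j" for j using minimal[of j] that unfolding g_def by linarith
  then have "{j. z < j \<and> w j < w z} = {}" by blast
  then have "inv_code w z = 0" unfolding inv_code_def by (metis card.empty of_nat_0)
  then show ?thesis by (rule that)
qed

lemma inv_code_seq:
  assumes "affine_perm n w" "0 < n" "avoids_312 w"
  shows "code_seq n (inv_code w)"
proof -
  obtain z where "inv_code w z = 0" using inv_code_has_zero[OF assms(1,2)] .
  then show ?thesis unfolding code_seq_def
    using assms(2) inv_code_shift[OF assms(1)] inv_code_step[OF assms] by (auto simp: inv_code_def)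
qed

text \<open>The order criterion of decoding holds for w itself, first for ascents \<dots>\<close>
lemma ascent_at_or_before_anchor:
  assumes w: "affine_perm n w" "0 < n" "avoids_312 w" and t: "t1 < t2" "w t1 < w t2"
  shows "t1 \<le> anchor (inv_code w) t2"
proof -
  \<comment> \<open>k is the last position before t2 with a value below w t2.\<close>
  have ex: "\<exists>d::nat. 0 < d \<and> w (t2 - int d) < w t2" using t by (intro exI[of _ "nat (t2 - t1)"]) auto
  define K where "K = (LEAST d::nat. 0 < d \<and> w (t2 - int d) < w t2)"
  define k where "k = t2 - int K"
  have K: "0 < K" "w k < w t2" using LeastI_ex[OF ex] unfolding K_def k_def by auto
  have "K \<le> nat (t2 - t1)" unfolding K_def using t by (intro Least_le) auto
  then have t1_k: "t1 \<le> k" unfolding k_def using t by simp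
  have between: "\<not> w m < w t2" if "k < m" "m < t2" for m
  proof -
    have "nat (t2 - m) < K" "0 < nat (t2 - m)" using that unfolding k_def by auto
    from not_less_Least[OF this(1)[unfolded K_def]] this(2) show ?thesis by auto
  qed
  have "{j. k < j \<and> w j < w k} \<subseteq> {j. t2 < j \<and> w j < w t2}"
  proof
    fix j assume j: "j \<in> {j. k < j \<and> w j < w k}"
    then have "\<not> j < t2" "j \<noteq> t2" using between[of j] K(2) by auto
    then show "j \<in> {j. t2 < j \<and> w j < w t2}" using j K by auto
  qed
  then have "inv_code w k \<le> inv_code w t2" unfolding inv_code_def
    by (simp add: card_mono inv_code_finite[OF w(1,2)])
  moreover have "k < t2" using K unfolding k_def by simp
  then have "k \<le> anchor (inv_code w) t2" using anchor_maximal \<open>inv_code w k \<le> inv_code w t2\<close> by blast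
  then show ?thesis using t1_k by simp
qed

text \<open>\<dots> and then for descents.\<close>
lemma descent_after_anchor:
  assumes w: "affine_perm n w" "0 < n" "avoids_312 w" and t: "t1 < t2" "w t2 < w t1"
  shows "anchor (inv_code w) t2 < t1"
proof (rule ccontr)
  let ?c = "inv_code w"
  assume "\<not> anchor ?c t2 < t1"
  \<comment> \<open>Avoiding 312, every position from t1 to t2 carries a value above w t2.\<close>
  have above: "w t2 < w k" if "t1 \<le> k" "k < t2" for k
  proof (cases "k = t1")
    case False
    have "w k \<noteq> w t2" using affine_perm_inj[OF w(1)] that by (metis injD less_irrefl)
    moreover have "\<not> w k < w t2"
    proof
      assume "w k < w t2"
      moreover have "t1 < k" using False that by simp
      ultimately show False using w(3) that(2) t(2) unfolding avoids_312_def by blast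
    qed
    ultimately show ?thesis by simp
  qed (use t in simp)
  have code_above: "?c t2 < ?c k" if "t1 \<le> k" "k < t2" for k
  proof -
    have "insert t2 {j. t2 < j \<and> w j < w t2} \<subseteq> {j. k < j \<and> w j < w k}"
      using above[OF that] that by auto
    then have "card (insert t2 {j. t2 < j \<and> w j < w t2}) \<le> card {j. k < j \<and> w j < w k}"
      by (rule card_mono[OF inv_code_finite[OF w(1,2)]])
    then show ?thesis unfolding inv_code_def using inv_code_finite[OF w(1,2)] by simp
  qed
  have "anchor ?c t2 < t2" "?c (anchor ?c t2) \<le> ?c t2"
    using anchor_below[OF inv_code_seq[OF w]] by auto
  then show False using code_above[of "anchor ?c t2"] \<open>\<not> anchor ?c t2 < t1\<close> by simp
qed

lemma decode_inv_code:
  assumes w: "affine_perm n w" "0 < n" "avoids_312 w"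
  shows "decode (inv_code w) = w"
proof (rule affine_perm_eqI_same_order[OF decode_affine[OF inv_code_seq[OF w]] w(1,2)])
  fix a b :: int assume "a < b"
  moreover have "w a \<noteq> w b" using affine_perm_inj[OF w(1)] \<open>a < b\<close> by (metis injD less_irrefl)
  ultimately show "decode (inv_code w) a < decode (inv_code w) b \<longleftrightarrow> w a < w b"
    using decode_less_iff[OF inv_code_seq[OF w] \<open>a < b\<close>] ascent_at_or_before_anchor[OF w \<open>a < b\<close>]
      descent_after_anchor[OF w \<open>a < b\<close>] by (cases "w a < w b") auto
qed

section \<open>Counting 312-avoiding affine permutations\<close>

definition affine_avoiders_312 :: "nat \<Rightarrow> (int \<Rightarrow> int) set" where
  "affine_avoiders_312 n = {w. affine_perm n w \<and> avoids_312 w}"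

lemma inv_code_bij:
  assumes "0 < n"
  shows "bij_betw inv_code (affine_avoiders_312 n) {c. code_seq n c}"
proof (rule bij_betw_byWitness[where f' = decode])
  show "\<forall>w \<in> affine_avoiders_312 n. decode (inv_code w) = w"
    using decode_inv_code assms unfolding affine_avoiders_312_def by blast
  show "\<forall>c \<in> {c. code_seq n c}. inv_code (decode c) = c"
    using inv_code_decode by blast
  show "inv_code ` affine_avoiders_312 n \<subseteq> {c. code_seq n c}"
    using inv_code_seq assms unfolding affine_avoiders_312_def by blast
  show "decode ` {c. code_seq n c} \<subseteq> affine_avoiders_312 n"
    using decode_affine decode_avoids_312 unfolding affine_avoiders_312_def by blast
qed

definition weak_compositions :: "nat \<Rightarrow> nat list set" where
  "weak_compositions n = {l. length l = n \<and> sum_list l = n}"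

definition increments :: "nat \<Rightarrow> (int \<Rightarrow> int) \<Rightarrow> nat list" where
  "increments n c = map (\<lambda>i. nat (c (int i + 1) + 1 - c (int i))) [0..<n]"

lemma increments_nonneg:
  assumes "code_seq n c"
  shows "0 \<le> c (t + 1) + 1 - c t"
proof -
  have "c t \<le> c (t + 1) + 1" using assms unfolding code_seq_def by blast
  then show ?thesis by simp
qed

text \<open>The increments telescope over a period, so they form a weak composition of n.\<close>
lemma increments_weak_composition:
  assumes c: "code_seq n c"
  shows "increments n c \<in> weak_compositions n"
proof -
  have "int (sum_list (increments n c)) = (\<Sum>i<n. int (nat (c (int i + 1) + 1 - c (int i))))"
    unfolding increments_def by (simp add: sum_list_sum_nth atLeast0LessThan)
  also have "\<dots> = (\<Sum>i<n. (c (int (Suc i)) - c (int i)) + 1)"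
  proof (rule sum.cong)
    show "int (nat (c (int i + 1) + 1 - c (int i))) = c (int (Suc i)) - c (int i) + 1" for i
      using increments_nonneg[OF c, of "int i"] by (simp add: add.commute)
  qed simp
  also have "\<dots> = (\<Sum>i<n. c (int (Suc i)) - c (int i)) + int n" by (simp add: sum.distrib)
  also have "\<dots> = c (int n) - c 0 + int n" by (subst sum_lessThan_telescope) simp
  also have "\<dots> = int n" using c unfolding code_seq_def by (metis add_0 diff_self add.commute)
  finally show ?thesis unfolding weak_compositions_def increments_def by simp
qed

text \<open>Two code sequences with equal increments differ by a constant, which vanishes because
  both attain their minimum 0.\<close>
lemma increments_inj: "inj_on (increments n) {c. code_seq n c}"
proof (rule inj_onI)
  fix c c' assume "c \<in> {c. code_seq n c}" "c' \<in> {c. code_seq n c}" and eq: "increments n c = increments n c'"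
  then have c: "code_seq n c" and c': "code_seq n c'" by auto
  define \<delta> where "\<delta> t = c t - c' t" for t
  have per: "\<delta> (t + int n) = \<delta> t" for t using c c' unfolding \<delta>_def code_seq_def by simp
  have step: "\<delta> (int i + 1) = \<delta> (int i)" if "i < n" for i
  proof -
    have "increments n c ! i = increments n c' ! i" using eq by simp
    then show ?thesis using that increments_nonneg[OF c, of "int i"] increments_nonneg[OF c', of "int i"]
      unfolding increments_def \<delta>_def by simp
  qed
  have const: "\<delta> t = \<delta> 0" for t
    using periodic_locally_constant[of \<delta> n, OF per step] c unfolding code_seq_def by blast
  obtain z z' where "c z = 0" "c' z' = 0" using c c' unfolding code_seq_def by blast
  moreover have "0 \<le> c' z" "0 \<le> c z'" using c c' unfolding code_seq_def by blast+
  ultimately have "\<delta> 0 = 0" using const[of z] const[of z'] unfolding \<delta>_def by simp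
  then show "c = c'" using const unfolding \<delta>_def by fastforce
qed

text \<open>Conversely, a weak composition e is the increment list of the code sequence built from the
  partial sums of e_k - 1, shifted to have minimum 0 and extended periodically.\<close>
definition partial_excess :: "nat list \<Rightarrow> nat \<Rightarrow> int" where
  "partial_excess e r = (\<Sum>k<r. int (e ! k) - 1)"

definition composition_code :: "nat \<Rightarrow> nat list \<Rightarrow> int \<Rightarrow> int" where
  "composition_code n e t =
     partial_excess e (nat (t mod int n)) - Min (partial_excess e ` {..<n})"

lemma composition_code_step:
  assumes n: "0 < n" and e: "e \<in> weak_compositions n"
  shows "composition_code n e (t + 1) = composition_code n e t + int (e ! nat (t mod int n)) - 1"
proof -
  have excess_Suc: "partial_excess e (Suc r) = partial_excess e r + int (e ! r) - 1" for r
    unfolding partial_excess_def by simp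
  have "partial_excess e n = int (sum_list e) - int n"
    using e unfolding partial_excess_def weak_compositions_def
    by (simp add: sum_subtractf sum_list_sum_nth atLeast0LessThan)
  then have excess_n: "partial_excess e n = 0" using e unfolding weak_compositions_def by simp
  have "0 \<le> t mod int n" "t mod int n < int n" using n by simp_all
  moreover have "(t + 1) mod int n = (t mod int n + 1) mod int n" by (simp add: mod_add_left_eq)
  ultimately consider "t mod int n + 1 = int n" "(t + 1) mod int n = 0"
    | "(t + 1) mod int n = t mod int n + 1"
    by (cases "t mod int n + 1 = int n") auto
  then show ?thesis
  proof cases
    case 1
    then have "int (Suc (nat (t mod int n))) = int n" using \<open>0 \<le> t mod int n\<close> by simp
    then have "Suc (nat (t mod int n)) = n" by (simp only: of_nat_eq_iff)
    then show ?thesis using excess_Suc[of "nat (t mod int n)"] excess_n 1(2)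
      unfolding composition_code_def by (simp add: partial_excess_def)
  next
    case 2
    then have "nat ((t + 1) mod int n) = Suc (nat (t mod int n))" using \<open>0 \<le> t mod int n\<close> by simp
    then show ?thesis unfolding composition_code_def using excess_Suc by simp
  qed
qed

lemma composition_code_seq:
  assumes n: "0 < n" and e: "e \<in> weak_compositions n"
  shows "code_seq n (composition_code n e)"
  unfolding code_seq_def
proof (intro conjI allI)
  show "0 < n" by fact
  fix t
  have "nat (t mod int n) \<in> {..<n}" using n by (simp add: nat_less_iff)
  then show "0 \<le> composition_code n e t" unfolding composition_code_def by simp
  show "composition_code n e (t + int n) = composition_code n e t"
    unfolding composition_code_def by simp
  show "composition_code n e t \<le> composition_code n e (t + 1) + 1"
    using composition_code_step[OF n e, of t] by simp
next
  obtain r where "r < n" "partial_excess e r = Min (partial_excess e ` {..<n})"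
    using Min_in[of "partial_excess e ` {..<n}"] n by fastforce
  then have "composition_code n e (int r) = 0" unfolding composition_code_def by simp
  then show "\<exists>z. composition_code n e z = 0" by blast
qed

lemma increments_composition_code:
  assumes n: "0 < n" and e: "e \<in> weak_compositions n"
  shows "increments n (composition_code n e) = e"
proof -
  have "increments n (composition_code n e) = map (\<lambda>i. e ! i) [0..<n]"
    unfolding increments_def using composition_code_step[OF n e] by simp
  also have "\<dots> = e" using e map_nth[of e] unfolding weak_compositions_def by simp
  finally show ?thesis .
qed

lemma increments_bij:
  assumes "0 < n"
  shows "bij_betw (increments n) {c. code_seq n c} (weak_compositions n)"
  unfolding bij_betw_def
proof
  show "inj_on (increments n) {c. code_seq n c}" by (rule increments_inj)
  show "increments n ` {c. code_seq n c} = weak_compositions n"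
  proof
    show "increments n ` {c. code_seq n c} \<subseteq> weak_compositions n"
      using increments_weak_composition by blast
    show "weak_compositions n \<subseteq> increments n ` {c. code_seq n c}"
      using increments_composition_code[OF assms] composition_code_seq[OF assms]
      by (metis (mono_tags) image_eqI mem_Collect_eq subsetI)
  qed
qed

lemma card_affine_avoiders_312:
  assumes "0 < n"
  shows "finite (affine_avoiders_312 n) \<and> card (affine_avoiders_312 n) = (2 * n - 1) choose n"
proof -
  have bij: "bij_betw (increments n \<circ> inv_code) (affine_avoiders_312 n) (weak_compositions n)"
    using bij_betw_trans[OF inv_code_bij increments_bij] assms by blast
  have card: "card (weak_compositions n) = (2 * n - 1) choose n"
    unfolding weak_compositions_def using card_length_sum_list[of n n] by (simp add: mult_2)
  moreover have "0 < (2 * n - 1) choose n" using assms by simp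
  ultimately have "finite (weak_compositions n)" using card_gt_0_iff by metis
  then show ?thesis using bij_betw_finite[OF bij] bij_betw_same_card[OF bij] card by simp
qed

section \<open>Reverse-complement and the pattern 231\<close>

definition avoids_231 :: "(int \<Rightarrow> int) \<Rightarrow> bool" where
  "avoids_231 w \<longleftrightarrow> \<not> (\<exists>i j k. i < j \<and> j < k \<and> w k < w i \<and> w i < w j)"

definition affine_avoiders_231 :: "nat \<Rightarrow> (int \<Rightarrow> int) set" where
  "affine_avoiders_231 n = {w. affine_perm n w \<and> avoids_231 w}"

text \<open>Reversing positions and complementing values about (n + 1)/2 preserves the affine
  symmetric group and exchanges the patterns 312 and 231.\<close>
definition reverse_complement :: "nat \<Rightarrow> (int \<Rightarrow> int) \<Rightarrow> int \<Rightarrow> int" where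
  "reverse_complement n w i = int n + 1 - w (int n + 1 - i)"

lemma reverse_complement_involution: "reverse_complement n (reverse_complement n w) = w"
  unfolding reverse_complement_def by simp

lemma reverse_complement_affine:
  assumes w: "affine_perm n w"
  shows "affine_perm n (reverse_complement n w)"
proof -
  let ?N = "int n + 1"
  have reflect_bij: "bij (\<lambda>x::int. ?N - x)" by (rule o_bij[of "\<lambda>x::int. ?N - x"]) (auto simp: o_def)
  have "reverse_complement n w = (\<lambda>x. ?N - x) \<circ> w \<circ> (\<lambda>i. ?N - i)"
    unfolding reverse_complement_def by (simp add: o_def)
  then have bij: "bij (reverse_complement n w)"
    using reflect_bij w unfolding affine_perm_def by (simp add: bij_comp)
  have shift: "reverse_complement n w (t + int n) = reverse_complement n w t + int n" for t
    using affine_perm_shift[OF w, of "?N - t - int n"] unfolding reverse_complement_def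
    by (simp add: algebra_simps)
  have reflect_sum: "(\<Sum>i = 1..int n. f (?N - i)) = (\<Sum>i = 1..int n. f i)" for f :: "int \<Rightarrow> int"
    by (rule sum.reindex_bij_witness[of _ "\<lambda>j. ?N - j" "\<lambda>j. ?N - j"]) auto
  have "(\<Sum>i = 1..int n. reverse_complement n w i) = (\<Sum>i = 1..int n. ?N - i) + (\<Sum>i = 1..int n. i)
      - (\<Sum>i = 1..int n. w i)"
    unfolding reverse_complement_def reflect_sum[of "\<lambda>j. ?N - w j"] by (simp add: sum_subtractf)
  also have "\<dots> = int ((n + 1) choose 2)"
    using w sum_first_integers[of n] reflect_sum[of id] unfolding affine_perm_def by simp
  finally show ?thesis unfolding affine_perm_def using bij shift by blast
qed

lemma reverse_complement_avoids_312: "avoids_312 (reverse_complement n w) \<longleftrightarrow> avoids_231 w"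
proof -
  let ?N = "int n + 1"
  have "(\<exists>i j k. i < j \<and> j < k \<and> reverse_complement n w j < reverse_complement n w k
      \<and> reverse_complement n w k < reverse_complement n w i)
    \<longleftrightarrow> (\<exists>i j k. i < j \<and> j < k \<and> w k < w i \<and> w i < w j)"
  proof
    assume "\<exists>i j k. i < j \<and> j < k \<and> reverse_complement n w j < reverse_complement n w k
      \<and> reverse_complement n w k < reverse_complement n w i"
    then obtain i j k where "i < j" "j < k" "reverse_complement n w j < reverse_complement n w k"
      "reverse_complement n w k < reverse_complement n w i" by blast
    then show "\<exists>i j k. i < j \<and> j < k \<and> w k < w i \<and> w i < w j" unfolding reverse_complement_def
      by (intro exI[of _ "?N - k"] exI[of _ "?N - j"] exI[of _ "?N - i"]) simp
  next
    assume "\<exists>i j k. i < j \<and> j < k \<and> w k < w i \<and> w i < w j"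
    then obtain i j k where "i < j" "j < k" "w k < w i" "w i < w j" by blast
    then show "\<exists>i j k. i < j \<and> j < k \<and> reverse_complement n w j < reverse_complement n w k
      \<and> reverse_complement n w k < reverse_complement n w i" unfolding reverse_complement_def
      by (intro exI[of _ "?N - k"] exI[of _ "?N - j"] exI[of _ "?N - i"]) simp
  qed
  then show ?thesis unfolding avoids_312_def avoids_231_def by blast
qed

lemma card_affine_avoiders_231:
  assumes "0 < n"
  shows "finite (affine_avoiders_231 n) \<and> card (affine_avoiders_231 n) = (2 * n - 1) choose n"
proof -
  have "affine_avoiders_231 n = reverse_complement n ` affine_avoiders_312 n"
  proof (intro set_eqI iffI)
    fix w assume "w \<in> affine_avoiders_231 n"
    then have "reverse_complement n w \<in> affine_avoiders_312 n"
      unfolding affine_avoiders_231_def affine_avoiders_312_def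
      using reverse_complement_affine reverse_complement_avoids_312 by auto
    then show "w \<in> reverse_complement n ` affine_avoiders_312 n"
      using reverse_complement_involution[of n w] by force
  next
    fix w assume "w \<in> reverse_complement n ` affine_avoiders_312 n"
    then obtain v where v: "affine_perm n v" "avoids_312 v" "w = reverse_complement n v"
      unfolding affine_avoiders_312_def by blast
    then have "avoids_312 (reverse_complement n w)" using reverse_complement_involution by metis
    then show "w \<in> affine_avoiders_231 n" unfolding affine_avoiders_231_def
      using reverse_complement_avoids_312 reverse_complement_affine v by blast
  qed
  moreover have "inj_on (reverse_complement n) (affine_avoiders_312 n)"
    by (metis inj_onI reverse_complement_involution)
  ultimately show ?thesis using card_affine_avoiders_312[OF assms] by (simp add: card_image)
qed

section \<open>Reduction of the remaining patterns\<close>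

lemma avoiders_eq: "avoiders n p = {w. affine_perm n w \<and> \<not> contains_pattern w p}"
  unfolding avoiders_def affine_sym_group_def avoids_pattern_def by simp

text \<open>An affine permutation avoids 1243, 1324, 2134 and 2143 only if it has no inversion.\<close>
lemma avoiders_identity_patterns:
  assumes n: "0 < n" and p: "p \<in> {[1,2,4,3], [1,3,2,4], [2,1,3,4], [2,1,4,3]}"
  shows "avoiders n p = {id}"
proof -
  have "contains_pattern w p" if w: "affine_perm n w" "w \<noteq> id" for w
  proof -
    obtain a b where "a < b" "w b < w a" using affine_perm_no_inversion_id[OF w(1) n] w(2) by blast
    then show ?thesis using inversion_contains_patterns[OF w(1) n] p by auto
  qed
  moreover have "\<not> contains_pattern id [1,2,4,3]" "\<not> contains_pattern id [1,3,2,4]"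
    "\<not> contains_pattern id [2,1,3,4]" "\<not> contains_pattern id [2,1,4,3]"
    unfolding contains_1243 contains_1324 contains_2134 contains_2143 by auto
  then have "\<not> contains_pattern id p" using p by blast
  ultimately show ?thesis unfolding avoiders_eq using affine_perm_id by blast
qed

text \<open>An occurrence of 231 extends to 1342 by a far-left translate of its first entry, and to
  2314 by a far-right translate of its last entry; likewise 312 extends to 1423 and 3124.\<close>
lemma avoiders_1342:
  assumes n: "0 < n"
  shows "avoiders n [1,3,4,2] = affine_avoiders_231 n"
proof -
  have "contains_pattern w [1,3,4,2] \<longleftrightarrow> \<not> avoids_231 w" if w: "affine_perm n w" for w
  proof
    assume "contains_pattern w [1,3,4,2]"
    then obtain i j k l where occurrence: "i < j" "j < k" "k < l" "w i < w l" "w l < w j" "w j < w k"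
      unfolding contains_1342 by blast
    show "\<not> avoids_231 w" unfolding avoids_231_def not_not
      by (rule exI[of _ j], rule exI[of _ k], rule exI[of _ l]) (simp add: occurrence)
  next
    assume "\<not> avoids_231 w"
    then obtain i j k where ijk: "i < j" "j < k" "w k < w i" "w i < w j" unfolding avoids_231_def by blast
    obtain M where M: "w i - w k + 1 \<le> M" "\<And>t. w (t + M) = w t + M" "\<And>t. w (t - M) = w t - M"
      using affine_perm_large_translation[OF w n, of "w i - w k + 1"] by blast
    show "contains_pattern w [1,3,4,2]" unfolding contains_1342
      by (rule exI[of _ "i - M"], rule exI[of _ i], rule exI[of _ j], rule exI[of _ k])
        (use ijk M(1) M(3)[of i] in auto)
  qed
  then show ?thesis unfolding avoiders_eq affine_avoiders_231_def by auto
qed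

lemma avoiders_2314:
  assumes n: "0 < n"
  shows "avoiders n [2,3,1,4] = affine_avoiders_231 n"
proof -
  have "contains_pattern w [2,3,1,4] \<longleftrightarrow> \<not> avoids_231 w" if w: "affine_perm n w" for w
  proof
    assume "contains_pattern w [2,3,1,4]"
    then obtain i j k l where occurrence: "i < j" "j < k" "k < l" "w k < w i" "w i < w j" "w j < w l"
      unfolding contains_2314 by blast
    show "\<not> avoids_231 w" unfolding avoids_231_def not_not
      by (rule exI[of _ i], rule exI[of _ j], rule exI[of _ k]) (simp add: occurrence)
  next
    assume "\<not> avoids_231 w"
    then obtain i j k where ijk: "i < j" "j < k" "w k < w i" "w i < w j" unfolding avoids_231_def by blast
    obtain M where M: "w j - w k + 1 \<le> M" "\<And>t. w (t + M) = w t + M" "\<And>t. w (t - M) = w t - M"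
      using affine_perm_large_translation[OF w n, of "w j - w k + 1"] by blast
    show "contains_pattern w [2,3,1,4]" unfolding contains_2314
      by (rule exI[of _ i], rule exI[of _ j], rule exI[of _ k], rule exI[of _ "k + M"])
        (use ijk M(1) M(2)[of k] in auto)
  qed
  then show ?thesis unfolding avoiders_eq affine_avoiders_231_def by auto
qed

lemma avoiders_1423:
  assumes n: "0 < n"
  shows "avoiders n [1,4,2,3] = affine_avoiders_312 n"
proof -
  have "contains_pattern w [1,4,2,3] \<longleftrightarrow> \<not> avoids_312 w" if w: "affine_perm n w" for w
  proof
    assume "contains_pattern w [1,4,2,3]"
    then obtain i j k l where occurrence: "i < j" "j < k" "k < l" "w i < w k" "w k < w l" "w l < w j"
      unfolding contains_1423 by blast
    show "\<not> avoids_312 w" unfolding avoids_312_def not_not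
      by (rule exI[of _ j], rule exI[of _ k], rule exI[of _ l]) (simp add: occurrence)
  next
    assume "\<not> avoids_312 w"
    then obtain i j k where ijk: "i < j" "j < k" "w j < w k" "w k < w i" unfolding avoids_312_def by blast
    obtain M where M: "w i - w j + 1 \<le> M" "\<And>t. w (t + M) = w t + M" "\<And>t. w (t - M) = w t - M"
      using affine_perm_large_translation[OF w n, of "w i - w j + 1"] by blast
    show "contains_pattern w [1,4,2,3]" unfolding contains_1423
      by (rule exI[of _ "i - M"], rule exI[of _ i], rule exI[of _ j], rule exI[of _ k])
        (use ijk M(1) M(3)[of i] in auto)
  qed
  then show ?thesis unfolding avoiders_eq affine_avoiders_312_def by auto
qed

lemma avoiders_3124:
  assumes n: "0 < n"
  shows "avoiders n [3,1,2,4] = affine_avoiders_312 n"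
proof -
  have "contains_pattern w [3,1,2,4] \<longleftrightarrow> \<not> avoids_312 w" if w: "affine_perm n w" for w
  proof
    assume "contains_pattern w [3,1,2,4]"
    then obtain i j k l where occurrence: "i < j" "j < k" "k < l" "w j < w k" "w k < w i" "w i < w l"
      unfolding contains_3124 by blast
    show "\<not> avoids_312 w" unfolding avoids_312_def not_not
      by (rule exI[of _ i], rule exI[of _ j], rule exI[of _ k]) (simp add: occurrence)
  next
    assume "\<not> avoids_312 w"
    then obtain i j k where ijk: "i < j" "j < k" "w j < w k" "w k < w i" unfolding avoids_312_def by blast
    obtain M where M: "w i - w k + 1 \<le> M" "\<And>t. w (t + M) = w t + M" "\<And>t. w (t - M) = w t - M"
      using affine_perm_large_translation[OF w n, of "w i - w k + 1"] by blast
    show "contains_pattern w [3,1,2,4]" unfolding contains_3124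
      by (rule exI[of _ i], rule exI[of _ j], rule exI[of _ k], rule exI[of _ "k + M"])
        (use ijk M(1) M(2)[of k] in auto)
  qed
  then show ?thesis unfolding avoiders_eq affine_avoiders_312_def by auto
qed

theorem theorem5p1:
  fixes n :: nat
  assumes "n \<ge> 2"
  shows "avoiders n [1,2,3,4] = {}
    \<and> (\<forall>p \<in> {[1,2,4,3], [1,3,2,4], [2,1,3,4], [2,1,4,3]}. avoiders n p = {id})
    \<and> (\<forall>p \<in> {[1,3,4,2], [1,4,2,3], [2,3,1,4], [3,1,2,4]}.
          finite (avoiders n p) \<and> card (avoiders n p) = (2 * n - 1) choose n)"
proof -
  have n: "0 < n" using assms by simp
  have "avoiders n [1,2,3,4] = {}"
    unfolding avoiders_eq using affine_perm_contains_1234[OF _ n] by blast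
  moreover have "\<forall>p \<in> {[1,2,4,3], [1,3,2,4], [2,1,3,4], [2,1,4,3]}. avoiders n p = {id}"
    using avoiders_identity_patterns[OF n] by blast
  moreover have "finite (avoiders n p) \<and> card (avoiders n p) = (2 * n - 1) choose n"
    if "p \<in> {[1,3,4,2], [1,4,2,3], [2,3,1,4], [3,1,2,4]}" for p
  proof -
    have "avoiders n p = affine_avoiders_231 n \<or> avoiders n p = affine_avoiders_312 n"
      using that avoiders_1342[OF n] avoiders_1423[OF n] avoiders_2314[OF n] avoiders_3124[OF n]
      by blast
    then show ?thesis using card_affine_avoiders_231[OF n] card_affine_avoiders_312[OF n] by auto
  qed
  ultimately show ?thesis by blast
qed

end
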